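(* For all $g,g'\in G$: (i) $\langle go,g\omega_-\rangle=H(gr)=-\langle g^{-1}o,\omega_-\rangle$; (ii) $H(g'g)=H(g)+\langle g'o,g'g\omega_+\rangle$; (iii) $H(g'gr)=H(gr)+\langle g'o,g'g\omega_-\rangle$.
   Context: Let $q\ge2$ and $\mathfrak G$ the $(q+1)$-regular tree with vertex set $\mathfrak X$ and graph distance $d$; $\Omega$ is its boundary (infinite non-backtracking edge chains modulo eventual equality up to shift), $[x,\omega)$ the geodesic ray from $x$ to $\omega$. Fix a vertex $o$ and $\omega_-\neq\omega_+\in\Omega$ such that $o$ lies on the geodesic $]\omega_-,\omega_+[$. Horocycle bracket: $\langle x,\omega\rangle=d(o,y)-d(x,y)$ where $[o,\omega)\cap[x,\omega)=[y,\omega)$. $G=\mathrm{Aut}(\mathfrak G)$, $K=\mathrm{Stab}_G(o)$, $B_{\omega_+}=\{g\in G:g\omega_+=\omega_+,\ g\text{ fixes some vertex}\}$, and $\tau\in G$ a fixed automorphism with $\tau\omega_\pm=\omega_\pm$ translating $]\omega_-,\omega_+[$ by one step towards $\omega_+$. Every $g\in G$ can be written $g=kn\tau^j$ with $k\in K$, $n\in B_{\omega_+}$, and $j=:H(g)\in\mathbb Z$ unique. $r\in K$ is a fixed element with $r^2=\mathrm{id}$ and $r\tau^jr^{-1}=\tau^{-j}$ for all $j\in\mathbb Z$. *)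

theory Defs
  imports Main
begin

definition walk :: "('v \<Rightarrow> 'v \<Rightarrow> bool) \<Rightarrow> (nat \<Rightarrow> 'v) \<Rightarrow> nat \<Rightarrow> bool" where
  "walk E p n \<longleftrightarrow> (\<forall>i<n. E (p i) (p (Suc i)))"

definition gdist :: "('v \<Rightarrow> 'v \<Rightarrow> bool) \<Rightarrow> 'v \<Rightarrow> 'v \<Rightarrow> nat" where
  "gdist E x y = (LEAST n. \<exists>p. p 0 = x \<and> p n = y \<and> walk E p n)"

definition regular_tree :: "('v \<Rightarrow> 'v \<Rightarrow> bool) \<Rightarrow> nat \<Rightarrow> bool" where
  "regular_tree E q \<longleftrightarrow>
     (\<forall>x y. E x y \<longrightarrow> E y x) \<and> (\<forall>x. \<not> E x x) \<and>
     (\<forall>x y. \<exists>p n. p 0 = x \<and> p n = y \<and> walk E p n) \<and>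
     (\<forall>p n. \<not> (n \<ge> 3 \<and> walk E p n \<and> p n = p 0 \<and> inj_on p {..<n})) \<and>
     (\<forall>x. finite {y. E x y} \<and> card {y. E x y} = q + 1)"

definition ray :: "('v \<Rightarrow> 'v \<Rightarrow> bool) \<Rightarrow> (nat \<Rightarrow> 'v) \<Rightarrow> bool" where
  "ray E \<gamma> \<longleftrightarrow> (\<forall>n. E (\<gamma> n) (\<gamma> (Suc n)) \<and> \<gamma> n \<noteq> \<gamma> (Suc (Suc n)))"

definition ray_equiv :: "(nat \<Rightarrow> 'v) \<Rightarrow> (nat \<Rightarrow> 'v) \<Rightarrow> bool" where
  "ray_equiv \<gamma> \<delta> \<longleftrightarrow> (\<exists>k m. \<forall>n. \<gamma> (n + k) = \<delta> (n + m))"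

definition boundary :: "('v \<Rightarrow> 'v \<Rightarrow> bool) \<Rightarrow> (nat \<Rightarrow> 'v) set set" where
  "boundary E = {{\<delta>. ray E \<delta> \<and> ray_equiv \<gamma> \<delta>} | \<gamma>. ray E \<gamma>}"

definition geo_ray :: "'v \<Rightarrow> (nat \<Rightarrow> 'v) set \<Rightarrow> (nat \<Rightarrow> 'v)" where
  "geo_ray x \<omega> = (THE \<gamma>. \<gamma> \<in> \<omega> \<and> \<gamma> 0 = x)"

definition horo :: "('v \<Rightarrow> 'v \<Rightarrow> bool) \<Rightarrow> 'v \<Rightarrow> 'v \<Rightarrow> (nat \<Rightarrow> 'v) set \<Rightarrow> int" where
  "horo E v0 x \<omega> =
     (let y = (THE y. range (geo_ray v0 \<omega>) \<inter> range (geo_ray x \<omega>) = range (geo_ray y \<omega>))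
      in int (gdist E v0 y) - int (gdist E x y))"

definition aut :: "('v \<Rightarrow> 'v \<Rightarrow> bool) \<Rightarrow> ('v \<Rightarrow> 'v) set" where
  "aut E = {g. bij g \<and> (\<forall>x y. E x y \<longleftrightarrow> E (g x) (g y))}"

definition bd_act :: "('v \<Rightarrow> 'v) \<Rightarrow> (nat \<Rightarrow> 'v) set \<Rightarrow> (nat \<Rightarrow> 'v) set" where
  "bd_act g \<omega> = (\<lambda>\<gamma>. g \<circ> \<gamma>) ` \<omega>"

definition stab :: "('v \<Rightarrow> 'v \<Rightarrow> bool) \<Rightarrow> 'v \<Rightarrow> ('v \<Rightarrow> 'v) set" where
  "stab E v0 = {k \<in> aut E. k v0 = v0}"

definition horo_stab :: "('v \<Rightarrow> 'v \<Rightarrow> bool) \<Rightarrow> (nat \<Rightarrow> 'v) set \<Rightarrow> ('v \<Rightarrow> 'v) set" where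
  "horo_stab E \<omega> = {g \<in> aut E. bd_act g \<omega> = \<omega> \<and> (\<exists>x. g x = x)}"

definition zpow :: "('v \<Rightarrow> 'v) \<Rightarrow> int \<Rightarrow> ('v \<Rightarrow> 'v)" where
  "zpow f j = (if 0 \<le> j then f ^^ nat j else (inv f) ^^ nat (- j))"

definition Hfun :: "('v \<Rightarrow> 'v \<Rightarrow> bool) \<Rightarrow> 'v \<Rightarrow> (nat \<Rightarrow> 'v) set \<Rightarrow> ('v \<Rightarrow> 'v) \<Rightarrow> ('v \<Rightarrow> 'v) \<Rightarrow> int" where
  "Hfun E v0 \<omega>p \<tau> g = (THE j. \<exists>k n. k \<in> stab E v0 \<and> n \<in> horo_stab E \<omega>p \<and> g = k \<circ> n \<circ> zpow \<tau> j)"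

definition line :: "('v \<Rightarrow> 'v \<Rightarrow> bool) \<Rightarrow> (int \<Rightarrow> 'v) \<Rightarrow> bool" where
  "line E L \<longleftrightarrow> (\<forall>i. E (L i) (L (i + 1)) \<and> L i \<noteq> L (i + 2))"

end

theory Submission
  imports Defs
begin

(* Write o = L 0. The horocycle bracket <x, omega> is the eventual value of d(o, z) - d(x, z)
   as z runs to omega along a ray; hence it satisfies the cocycle identity
   <g x, g omega> = <x, omega> + <g o, g omega> for every automorphism g.
   Because the tree is regular, the stabiliser of o acts transitively on the rays from o.
   Mapping the ray from o to omega_+ onto the ray from o to g omega_+ splits g as k n tau^j with
   k fixing o, n fixing omega_+ and a vertex (so n preserves the horocycles at omega_+), and
   j = <g o, g omega_+>. Hence H(g) = <g o, g omega_+>, and H(g r) = <g o, g omega_-> since r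
   fixes o and maps omega_+ to omega_-. All three identities are instances of the cocycle
   identity. *)

section \<open>Walks and graph distance\<close>

lemma walk_shift: "walk E p n \<Longrightarrow> s \<le> n \<Longrightarrow> walk E (\<lambda>i. p (s + i)) (n - s)"
  unfolding walk_def by auto

lemma walk_append:
  assumes "walk E p m" "walk E p' n" "p m = p' 0"
  shows "walk E (\<lambda>i. if i \<le> m then p i else p' (i - m)) (m + n)"
  unfolding walk_def
proof (intro allI impI)
  fix i assume "i < m + n"
  then show "E (if i \<le> m then p i else p' (i - m))
      (if Suc i \<le> m then p (Suc i) else p' (Suc i - m))"
    using assms by (cases "i < m") (auto simp: walk_def Suc_diff_le)
qed

locale connected_graph =
  fixes E :: "'v \<Rightarrow> 'v \<Rightarrow> bool"
  assumes adj_sym: "E x y \<Longrightarrow> E y x"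
    and adj_irrefl: "\<not> E x x"
    and connected: "\<exists>p n. p 0 = x \<and> p n = y \<and> walk E p n"
begin

abbreviation d :: "'v \<Rightarrow> 'v \<Rightarrow> nat" where "d \<equiv> gdist E"

lemma walk_rev: "walk E p n \<Longrightarrow> walk E (\<lambda>i. p (n - i)) n"
  unfolding walk_def
proof (intro allI impI)
  fix i assume "\<forall>i<n. E (p i) (p (Suc i))" and "i < n"
  then have "E (p (n - Suc i)) (p (Suc (n - Suc i)))" by auto
  moreover have "Suc (n - Suc i) = n - i" using \<open>i < n\<close> by simp
  ultimately show "E (p (n - i)) (p (n - Suc i))" by (metis adj_sym)
qed

lemma gdist_walk: "\<exists>p. p 0 = x \<and> p (d x y) = y \<and> walk E p (d x y)"
  unfolding gdist_def by (rule LeastI_ex) (use connected in blast)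

lemma gdist_le_walk: "p 0 = x \<Longrightarrow> p n = y \<Longrightarrow> walk E p n \<Longrightarrow> d x y \<le> n"
  unfolding gdist_def by (rule Least_le) blast

lemma gdist_self [simp]: "d x x = 0"
  using gdist_le_walk[of "\<lambda>_. x" x 0 x] by (simp add: walk_def)

lemma gdist_eq_0_iff [simp]: "d x y = 0 \<longleftrightarrow> x = y"
  using gdist_walk[of x y] by auto

lemma gdist_edge: "E x y \<Longrightarrow> d x y = 1"
  using gdist_le_walk[of "\<lambda>i. if i = 0 then x else y" x 1 y] adj_irrefl[of x] gdist_eq_0_iff[of x y]
  by (fastforce simp: walk_def)

lemma gdist_sym: "d x y = d y x"
proof -
  have "d y x \<le> d x y" for x y
  proof -
    obtain p where "p 0 = x" "p (d x y) = y" "walk E p (d x y)" using gdist_walk by blast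
    then show ?thesis using gdist_le_walk[OF _ _ walk_rev] by simp
  qed
  then show ?thesis by (metis le_antisym)
qed

lemma gdist_triangle: "d x z \<le> d x y + d y z"
proof -
  obtain p where p: "p 0 = x" "p (d x y) = y" "walk E p (d x y)" using gdist_walk by blast
  obtain p' where p': "p' 0 = y" "p' (d y z) = z" "walk E p' (d y z)" using gdist_walk by blast
  show ?thesis
    by (rule gdist_le_walk[OF _ _ walk_append[OF p(3) p'(3)]]) (use p p' in auto)
qed

lemma gdist_edge_le: "E x y \<Longrightarrow> d b y \<le> d b x + 1"
  using gdist_triangle[of b y x] gdist_edge[of x y] by simp

lemma walk_gdist_le: "walk E p n \<Longrightarrow> s \<le> t \<Longrightarrow> t \<le> n \<Longrightarrow> d (p s) (p t) \<le> t - s"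
  by (rule gdist_le_walk[of "\<lambda>i. p (s + i)"]) (auto simp: walk_def)

lemma geodesic_segment:
  assumes "walk E p n" "\<And>t. t \<le> n \<Longrightarrow> d (p 0) (p t) = t" "s \<le> t" "t \<le> n"
  shows "d (p s) (p t) = t - s"
  using gdist_triangle[of "p 0" "p t" "p s"] walk_gdist_le[OF assms(1), of s t] assms by fastforce

lemma geodesic_exists:
  "\<exists>p. p 0 = x \<and> p (d x y) = y \<and> walk E p (d x y) \<and> (\<forall>t\<le>d x y. d x (p t) = t)"
proof -
  obtain p where p: "p 0 = x" "p (d x y) = y" "walk E p (d x y)" using gdist_walk by blast
  have "d x (p t) = t" if "t \<le> d x y" for t
    using gdist_triangle[of x y "p t"] walk_gdist_le[OF p(3), of 0 t]
      walk_gdist_le[OF p(3), of t "d x y"] p that by fastforce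
  then show ?thesis using p by blast
qed

end

section \<open>Trees\<close>

lemma last_common_index:
  fixes m :: nat
  assumes "\<alpha> 0 = \<beta> 0" "\<alpha> m \<noteq> \<beta> m"
  obtains i where "i < m" "\<alpha> i = \<beta> i" "\<And>t. i < t \<Longrightarrow> t \<le> m \<Longrightarrow> \<alpha> t \<noteq> \<beta> t"
proof -
  define S where "S = {t. t \<le> m \<and> \<alpha> t = \<beta> t}"
  have S: "finite S" "0 \<in> S" unfolding S_def using assms(1) by simp_all
  have "Max S \<in> S" "\<And>t. t \<in> S \<Longrightarrow> t \<le> Max S" using S Max_in by auto
  with assms(2) show ?thesis
    by (intro that[of "Max S"]) (auto simp: S_def le_less, fastforce+)
qed

lemma loop_inj_by_levels:
  fixes c \<alpha> \<beta> w :: "nat \<Rightarrow> 'a" and level :: "'a \<Rightarrow> nat"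
  assumes pieces: "\<And>j. j < N \<Longrightarrow> (j \<le> m \<and> c j = \<alpha> j \<and> level (c j) = j)
      \<or> (m < j \<and> j < m + l \<and> c j = w (j - m) \<and> m < level (c j))
      \<or> (m + l \<le> j \<and> c j = \<beta> (N - j) \<and> level (c j) = N - j)"
    and N: "N = m + (l + m)" and "inj_on w {..l}"
    and disjoint: "\<And>t. 0 < t \<Longrightarrow> t \<le> m \<Longrightarrow> \<alpha> t \<noteq> \<beta> t"
  shows "inj_on c {..<N}"
proof -
  have "c j1 \<noteq> c j2" if j: "j1 < N" "j2 < N" "j1 < j2" for j1 j2
  proof
    assume "c j1 = c j2"
    then have "level (c j1) = level (c j2)" by simp
    with pieces[OF j(1)] pieces[OF j(2)] show False
    proof (elim disjE conjE)
      assume "m < j1" "j1 < m + l" "m < j2" "j2 < m + l" "c j1 = w (j1 - m)" "c j2 = w (j2 - m)"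
      then show False using inj_onD[OF \<open>inj_on w {..l}\<close>, of "j1 - m" "j2 - m"] \<open>c j1 = c j2\<close> j
        by force
    next
      assume "j1 \<le> m" "c j1 = \<alpha> j1" "level (c j1) = j1" "m + l \<le> j2" "c j2 = \<beta> (N - j2)"
        "level (c j2) = N - j2" "level (c j1) = level (c j2)"
      then show False using disjoint[of j1] \<open>c j1 = c j2\<close> j by (cases "j1 = 0") auto
    qed (use j N in auto)
  qed
  then show ?thesis by (metis inj_onI lessThan_iff linorder_cases)
qed

locale tree = connected_graph E for E :: "'v \<Rightarrow> 'v \<Rightarrow> bool" +
  assumes acyclic: "3 \<le> n \<Longrightarrow> walk E p n \<Longrightarrow> p n = p 0 \<Longrightarrow> inj_on p {..<n} \<Longrightarrow> False"
begin

text \<open>Out along \<alpha>, across w and back along \<beta> is a closed walk; it is a cycle because the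
  distance to b separates its three pieces and, on the two geodesic pieces, is the position.\<close>

lemma branches_not_joined_outside_ball:
  assumes \<alpha>: "walk E \<alpha> m" "\<alpha> 0 = b" "\<And>t. t \<le> m \<Longrightarrow> d b (\<alpha> t) = t"
    and \<beta>: "walk E \<beta> m" "\<beta> 0 = b" "\<And>t. t \<le> m \<Longrightarrow> d b (\<beta> t) = t"
    and disjoint: "\<And>t. 0 < t \<Longrightarrow> t \<le> m \<Longrightarrow> \<alpha> t \<noteq> \<beta> t" and "0 < m"
    and w: "walk E w l" "w 0 = \<alpha> m" "w l = \<beta> m" "0 < l" "inj_on w {..l}"
      "\<And>j. 0 < j \<Longrightarrow> j < l \<Longrightarrow> m < d b (w j)"
  shows False
proof -
  define N where "N = m + (l + m)"
  define c where
    "c j = (if j \<le> m then \<alpha> j else if j - m \<le> l then w (j - m) else \<beta> (m - (j - m - l)))" for j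
  have "walk E (\<lambda>i. if i \<le> l then w i else \<beta> (m - (i - l))) (l + m)"
    using walk_append[OF w(1) walk_rev[OF \<beta>(1)]] w(3) by simp
  then have "walk E
      (\<lambda>j. if j \<le> m then \<alpha> j else if j - m \<le> l then w (j - m) else \<beta> (m - (j - m - l)))
      (m + (l + m))"
    by (rule walk_append[OF \<alpha>(1)]) (simp add: w(2))
  then have walk: "walk E c N" unfolding c_def[abs_def] N_def .
  have closed: "c N = c 0" using \<alpha>(2) \<beta>(2) \<open>0 < m\<close> by (simp add: c_def N_def)
  have pieces: "(j \<le> m \<and> c j = \<alpha> j \<and> d b (c j) = j)
      \<or> (m < j \<and> j < m + l \<and> c j = w (j - m) \<and> m < d b (c j))
      \<or> (m + l \<le> j \<and> c j = \<beta> (N - j) \<and> d b (c j) = N - j)" if "j < N" for j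
  proof -
    consider "j \<le> m" | "m < j" "j < m + l" | "j = m + l" | "m + l < j" by linarith
    then show ?thesis
    proof cases
      case 4
      then have "m - (j - m - l) = N - j" "N - j \<le> m" using that unfolding N_def by arith+
      moreover have "\<not> j \<le> m" "\<not> j - m \<le> l" using 4 by auto
      ultimately have "c j = \<beta> (N - j)" "N - j \<le> m" by (simp_all add: c_def)
      then show ?thesis using 4 \<beta>(3) by simp
    qed (use \<alpha>(3) \<beta>(3) w(3) w(6)[of "j - m"] in \<open>auto simp: c_def N_def\<close>)
  qed
  have "inj_on c {..<N}"
    using loop_inj_by_levels[OF pieces N_def w(5) disjoint] by blast
  then show False
    using acyclic[OF _ walk closed] \<open>0 < m\<close> \<open>0 < l\<close> by (simp add: N_def)
qed

lemma geodesic_ends_not_joined_outside_ball: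
  assumes \<alpha>: "walk E \<alpha> m" "\<alpha> 0 = b" "\<And>t. t \<le> m \<Longrightarrow> d b (\<alpha> t) = t"
    and \<beta>: "walk E \<beta> m" "\<beta> 0 = b" "\<And>t. t \<le> m \<Longrightarrow> d b (\<beta> t) = t"
    and "\<alpha> m \<noteq> \<beta> m"
    and w: "walk E w l" "w 0 = \<alpha> m" "w l = \<beta> m" "0 < l" "inj_on w {..l}"
      "\<And>j. 0 < j \<Longrightarrow> j < l \<Longrightarrow> m < d b (w j)"
  shows False
proof -
  obtain i where i: "i < m" "\<alpha> i = \<beta> i" "\<And>t. i < t \<Longrightarrow> t \<le> m \<Longrightarrow> \<alpha> t \<noteq> \<beta> t"
    using last_common_index[of \<alpha> \<beta> m] \<alpha>(2) \<beta>(2) \<open>\<alpha> m \<noteq> \<beta> m\<close> by metis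
  have "d (\<alpha> i) (\<alpha> (i + t)) = t" "d (\<alpha> i) (\<beta> (i + t)) = t" if "t \<le> m - i" for t
    using geodesic_segment[OF \<alpha>(1), of i "i + t"] geodesic_segment[OF \<beta>(1), of i "i + t"]
      \<alpha>(2,3) \<beta>(2,3) i(1,2) that by auto
  moreover have "m - i < d (\<alpha> i) (w j)" if "0 < j" "j < l" for j
    using gdist_triangle[of b "w j" "\<alpha> i"] w(6)[OF that] \<alpha>(3)[of i] i(1) by simp
  ultimately show False
    using branches_not_joined_outside_ball[of "\<lambda>t. \<alpha> (i + t)" "m - i" "\<alpha> i" "\<lambda>t. \<beta> (i + t)" w l]
      walk_shift[OF \<alpha>(1), of i] walk_shift[OF \<beta>(1), of i] i w by auto
qed

lemma adjacent_gdist_neq: "E x y \<Longrightarrow> d b x \<noteq> d b y"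
proof
  assume "E x y" "d b x = d b y"
  obtain \<alpha> where "\<alpha> 0 = b" "\<alpha> (d b x) = x" "walk E \<alpha> (d b x)" "\<forall>t\<le>d b x. d b (\<alpha> t) = t"
    using geodesic_exists by blast
  moreover obtain \<beta> where "\<beta> 0 = b" "\<beta> (d b y) = y" "walk E \<beta> (d b y)" "\<forall>t\<le>d b y. d b (\<beta> t) = t"
    using geodesic_exists by blast
  moreover define w where "w j = (if j = 0 then x else y)" for j :: nat
  moreover have "x \<noteq> y" using \<open>E x y\<close> adj_irrefl by blast
  moreover have "walk E w 1" "inj_on w {..1}"
    using \<open>E x y\<close> \<open>x \<noteq> y\<close> by (auto simp: w_def walk_def inj_on_def le_Suc_eq)
  ultimately show False
    using geodesic_ends_not_joined_outside_ball[of \<alpha> "d b x" b \<beta> w 1] \<open>d b x = d b y\<close>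
    by (auto simp: w_def)
qed

lemma closer_neighbour_unique:
  assumes "E x y" "E x y'" "d b y < d b x" "d b y' < d b x"
  shows "y = y'"
proof (rule ccontr)
  assume "y \<noteq> y'"
  have levels: "d b y = d b y'" "d b x = Suc (d b y)"
    using gdist_edge_le[OF adj_sym[OF assms(1)], of b] gdist_edge_le[OF adj_sym[OF assms(2)], of b]
      assms(3,4)
    by auto
  obtain \<alpha> where "\<alpha> 0 = b" "\<alpha> (d b y) = y" "walk E \<alpha> (d b y)" "\<forall>t\<le>d b y. d b (\<alpha> t) = t"
    using geodesic_exists by blast
  moreover obtain \<beta> where "\<beta> 0 = b" "\<beta> (d b y') = y'" "walk E \<beta> (d b y')" "\<forall>t\<le>d b y'. d b (\<beta> t) = t"
    using geodesic_exists by blast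
  moreover define w where "w j = (if j = 0 then y else if j = 1 then x else y')" for j :: nat
  moreover have "walk E w 2" "inj_on w {..2}"
    using assms(1,2) adj_sym adj_irrefl \<open>y \<noteq> y'\<close>
    by (auto simp: w_def walk_def inj_on_def less_Suc_eq le_Suc_eq numeral_2_eq_2)
  ultimately show False
    using geodesic_ends_not_joined_outside_ball[of \<alpha> "d b y" b \<beta> w 2] levels \<open>y \<noteq> y'\<close>
    by (auto simp: w_def less_Suc_eq numeral_2_eq_2)
qed

text \<open>\<open>parent b b\<close> is an unspecified vertex.\<close>

definition parent :: "'v \<Rightarrow> 'v \<Rightarrow> 'v" where
  "parent b x = (SOME y. E x y \<and> d b y < d b x)"

lemma closer_neighbour_exists:
  assumes "x \<noteq> b" shows "\<exists>y. E x y \<and> d b y < d b x"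
proof -
  obtain p where p: "p 0 = b" "p (d b x) = x" "walk E p (d b x)" "\<forall>t\<le>d b x. d b (p t) = t"
    using geodesic_exists by blast
  have "0 < d b x" using assms by (metis gdist_eq_0_iff gr0I)
  then have "E (p (d b x - 1)) x" "d b (p (d b x - 1)) < d b x"
    using p by (auto simp: walk_def elim: allE[of _ "d b x - 1"])
  then show ?thesis using adj_sym by blast
qed

lemma parent_closer: "x \<noteq> b \<Longrightarrow> E x (parent b x) \<and> d b (parent b x) < d b x"
  unfolding parent_def by (rule someI_ex) (rule closer_neighbour_exists)

lemma parent_eqI: "E x y \<Longrightarrow> d b y < d b x \<Longrightarrow> parent b x = y"
  using parent_closer closer_neighbour_unique by (metis gdist_eq_0_iff less_zeroE)

lemma gdist_adjacent: "E x y \<Longrightarrow> d b y = Suc (d b x) \<or> d b x = Suc (d b y)"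
  using adjacent_gdist_neq[of x y b] gdist_edge_le[of x y b] gdist_edge_le[OF adj_sym, of x y b]
    by auto

lemma gdist_parent: "x \<noteq> b \<Longrightarrow> d b x = Suc (d b (parent b x))"
  using parent_closer[of x b] gdist_adjacent[of x "parent b x" b] by auto

lemma edge_iff_parent: "E x y \<longleftrightarrow> (x \<noteq> b \<and> y = parent b x) \<or> (y \<noteq> b \<and> x = parent b y)"
proof
  assume "E x y"
  then consider "d b y = Suc (d b x)" | "d b x = Suc (d b y)" using gdist_adjacent by blast
  then show "(x \<noteq> b \<and> y = parent b x) \<or> (y \<noteq> b \<and> x = parent b y)"
  proof cases
    case 1
    then have "y \<noteq> b" by auto
    then show ?thesis using parent_eqI[OF adj_sym[OF \<open>E x y\<close>]] 1 by simp
  next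
    case 2
    then have "x \<noteq> b" by auto
    then show ?thesis using parent_eqI[OF \<open>E x y\<close>] 2 by simp
  qed
qed (use parent_closer adj_sym in blast)

lemma nonbacktracking_walk_gdist:
  assumes walk: "walk E p n" and nonbacktracking: "\<And>i. i + 2 \<le> n \<Longrightarrow> p i \<noteq> p (i + 2)"
  shows "t \<le> n \<Longrightarrow> d (p 0) (p t) = t"
proof (induction t rule: less_induct)
  case (less t)
  consider "t = 0" | "t = 1" | s where "t = s + 2"
    by (metis add_2_eq_Suc' not0_implies_Suc One_nat_def)
  then show ?case
  proof cases
    case 1 then show ?thesis by simp
  next
    case 2 then show ?thesis using walk less.prems gdist_edge by (simp add: walk_def)
  next
    case 3
    have edges: "E (p (s + 1)) (p s)" "E (p (s + 1)) (p (s + 2))"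
      using walk less.prems 3 adj_sym by (auto simp: walk_def)
    have "d (p 0) (p s) = s" "d (p 0) (p (s + 1)) = s + 1" using less 3 by auto
    then have "parent (p 0) (p (s + 1)) = p s" using parent_eqI[OF edges(1)] by simp
    then have "\<not> d (p 0) (p (s + 2)) < d (p 0) (p (s + 1))"
      using parent_eqI[OF edges(2)] nonbacktracking[of s] less.prems 3 by auto
    then show ?thesis
      using gdist_adjacent[OF edges(2), of "p 0"] \<open>d (p 0) (p (s + 1)) = s + 1\<close> 3 by auto
  qed
qed

lemma geodesic_parent:
  assumes "walk E p n" "\<And>t. t \<le> n \<Longrightarrow> d x (p t) = t" "0 < t" "t \<le> n"
  shows "parent x (p t) = p (t - 1)"
proof (rule parent_eqI)
  show "E (p t) (p (t - 1))" using assms(1,3,4) adj_sym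
    by (auto simp: walk_def elim: allE[of _ "t - 1"])
  show "d x (p (t - 1)) < d x (p t)" using assms(2-4) by simp
qed

lemma geodesic_unique:
  assumes "walk E p n" "walk E p' n" "\<And>t. t \<le> n \<Longrightarrow> d x (p t) = t" "\<And>t. t \<le> n \<Longrightarrow> d x (p' t) = t"
    and "p n = p' n"
  shows "t \<le> n \<Longrightarrow> p t = p' t"
proof (induction "n - t" arbitrary: t)
  case 0 then show ?case using assms(5) by simp
next
  case (Suc k)
  then have "p (t + 1) = p' (t + 1)" by simp
  then show ?case
    using geodesic_parent[OF assms(1,3), of "t + 1"] geodesic_parent[OF assms(2,4), of "t + 1"] Suc
      by simp
qed

end

section \<open>Rays and the boundary\<close>

lemma ray_walk: "ray E \<gamma> \<Longrightarrow> walk E \<gamma> n"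
  unfolding ray_def walk_def by blast

lemma ray_shift: "ray E \<gamma> \<Longrightarrow> ray E (\<lambda>n. \<gamma> (n + k))"
  unfolding ray_def by simp

lemma ray_append:
  assumes "walk E p m" "\<And>t. t + 2 \<le> m \<Longrightarrow> p t \<noteq> p (t + 2)"
    and "ray E \<gamma>" "\<gamma> 0 = p m" "0 < m \<Longrightarrow> p (m - 1) \<noteq> \<gamma> 1"
  shows "ray E (\<lambda>i. if i \<le> m then p i else \<gamma> (i - m))" (is "ray E ?\<rho>")
proof -
  have "E (?\<rho> n) (?\<rho> (Suc n))" for n
    using walk_append[OF assms(1) ray_walk[OF assms(3)], of "Suc n"] assms(4)
      by (simp add: walk_def)
  moreover have "?\<rho> n \<noteq> ?\<rho> (Suc (Suc n))" for n
  proof -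
    consider "n + 2 \<le> m" | "n + 1 = m" | "m \<le> n" by linarith
    then show ?thesis
    proof cases
      case 1 then show ?thesis using assms(2)[of n] by simp
    next
      case 2 then show ?thesis using assms(5) by (auto simp: numeral_2_eq_2)
    next
      case 3
      then have "?\<rho> n = \<gamma> (n - m)" "?\<rho> (Suc (Suc n)) = \<gamma> (Suc (Suc (n - m)))"
        using assms(4) by (auto simp: Suc_diff_le)
      then show ?thesis using assms(3) unfolding ray_def by simp
    qed
  qed
  ultimately show ?thesis unfolding ray_def by blast
qed

lemma ray_equiv_refl: "ray_equiv \<gamma> \<gamma>"
  unfolding ray_equiv_def by (intro exI[of _ 0]) simp

lemma ray_equiv_sym: "ray_equiv \<gamma> \<delta> \<Longrightarrow> ray_equiv \<delta> \<gamma>"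
  unfolding ray_equiv_def by metis

lemma ray_equiv_trans:
  assumes "ray_equiv \<gamma> \<delta>" "ray_equiv \<delta> \<epsilon>" shows "ray_equiv \<gamma> \<epsilon>"
proof -
  obtain k m k' m' where "\<forall>n. \<gamma> (n + k) = \<delta> (n + m)" "\<forall>n. \<delta> (n + k') = \<epsilon> (n + m')"
    using assms unfolding ray_equiv_def by blast
  then have "\<gamma> (n + (k + k')) = \<epsilon> (n + (m + m'))" for n
    by (metis (no_types) add.assoc add.commute)
  then show ?thesis unfolding ray_equiv_def by blast
qed

lemma ray_equiv_shift: "ray_equiv \<gamma> (\<lambda>n. \<gamma> (n + k))"
  unfolding ray_equiv_def by (intro exI[of _ k] exI[of _ 0]) simp

lemma boundary_eq_class:
  assumes "\<omega> \<in> boundary E" "\<gamma> \<in> \<omega>" shows "\<omega> = {\<delta>. ray E \<delta> \<and> ray_equiv \<gamma> \<delta>}"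
proof -
  obtain \<gamma>0 where \<omega>: "\<omega> = {\<delta>. ray E \<delta> \<and> ray_equiv \<gamma>0 \<delta>}"
    using assms(1) unfolding boundary_def by blast
  then have "ray_equiv \<gamma>0 \<gamma>" using assms(2) by blast
  then have "ray_equiv \<gamma>0 \<delta> \<longleftrightarrow> ray_equiv \<gamma> \<delta>" for \<delta>
    using ray_equiv_sym ray_equiv_trans by blast
  then show ?thesis using \<omega> by blast
qed

lemma boundary_ray: "\<omega> \<in> boundary E \<Longrightarrow> \<gamma> \<in> \<omega> \<Longrightarrow> ray E \<gamma>"
  unfolding boundary_def by blast

lemma boundary_nonempty: "\<omega> \<in> boundary E \<Longrightarrow> \<exists>\<gamma>. \<gamma> \<in> \<omega>"
  unfolding boundary_def using ray_equiv_refl by blast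

lemma boundary_ray_equiv: "\<omega> \<in> boundary E \<Longrightarrow> \<gamma> \<in> \<omega> \<Longrightarrow> \<delta> \<in> \<omega> \<Longrightarrow> ray_equiv \<gamma> \<delta>"
  using boundary_eq_class by blast

lemma boundary_memI: "\<omega> \<in> boundary E \<Longrightarrow> \<gamma> \<in> \<omega> \<Longrightarrow> ray E \<delta> \<Longrightarrow> ray_equiv \<gamma> \<delta> \<Longrightarrow> \<delta> \<in> \<omega>"
  using boundary_eq_class by blast

lemma boundary_eqI: "\<omega> \<in> boundary E \<Longrightarrow> \<omega>' \<in> boundary E \<Longrightarrow> \<gamma> \<in> \<omega> \<Longrightarrow> \<gamma> \<in> \<omega>' \<Longrightarrow> \<omega> = \<omega>'"
  using boundary_eq_class[of \<omega> E \<gamma>] boundary_eq_class[of \<omega>' E \<gamma>] by simp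

lemma boundary_shift: "\<omega> \<in> boundary E \<Longrightarrow> \<gamma> \<in> \<omega> \<Longrightarrow> (\<lambda>n. \<gamma> (n + k)) \<in> \<omega>"
  using boundary_memI boundary_ray ray_shift ray_equiv_shift by blast

context tree
begin

lemma ray_gdist: "ray E \<gamma> \<Longrightarrow> d (\<gamma> 0) (\<gamma> n) = n"
  by (rule nonbacktracking_walk_gdist[of \<gamma> n]) (auto simp: ray_walk ray_def)

lemma ray_eqI:
  assumes "ray E \<gamma>" "ray E \<delta>" "\<gamma> 0 = \<delta> 0" "ray_equiv \<gamma> \<delta>"
  shows "\<gamma> = \<delta>"
proof
  obtain k m where km: "\<forall>n. \<gamma> (n + k) = \<delta> (n + m)" using assms(4) unfolding ray_equiv_def by blast
  then have "k = m" using ray_gdist[OF assms(1), of k] ray_gdist[OF assms(2), of m] assms(3)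
    by (metis add_0)
  fix t
  show "\<gamma> t = \<delta> t"
  proof (cases "t \<le> k")
    case True
    show ?thesis
      by (rule geodesic_unique[OF ray_walk[OF assms(1)] ray_walk[OF assms(2)] _ _ _ True])
        (use ray_gdist[OF assms(1)] ray_gdist[OF assms(2)] assms(3) km[rule_format, of 0] \<open>k = m\<close>
          in auto)
  next
    case False then show ?thesis using km[rule_format, of "t - k"] \<open>k = m\<close> by simp
  qed
qed

lemma boundary_ray_from:
  assumes "\<omega> \<in> boundary E" shows "\<exists>\<delta>\<in>\<omega>. \<delta> 0 = x"
proof -
  obtain \<gamma> where "\<gamma> \<in> \<omega>" using boundary_nonempty[OF assms] by blast
  then have \<gamma>: "ray E \<gamma>" using boundary_ray[OF assms] by blast
  \<comment> \<open>go straight to a vertex of \<gamma> nearest to x, then follow \<gamma>; by minimality this does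
    not backtrack at the junction\<close>
  obtain a where closest: "\<And>a'. d x (\<gamma> a) \<le> d x (\<gamma> a')"
    using ex_has_least_nat[where P = "\<lambda>_. True" and m = "\<lambda>a. d x (\<gamma> a)"] by blast
  define m where "m = d x (\<gamma> a)"
  obtain p where p: "p 0 = x" "p m = \<gamma> a" "walk E p m" "\<forall>t\<le>m. d x (p t) = t"
    using geodesic_exists m_def by blast
  define \<rho> where "\<rho> i = (if i \<le> m then p i else \<gamma> (i - m + a))" for i
  have "ray E \<rho>"
    unfolding \<rho>_def
  proof (rule ray_append[OF p(3) _ ray_shift[OF \<gamma>, of a]])
    show "p t \<noteq> p (t + 2)" if "t + 2 \<le> m" for t
      using p(4)[rule_format, of t] p(4)[rule_format, of "t + 2"] that by auto
    show "p (m - 1) \<noteq> \<gamma> (1 + a)" if "0 < m"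
      using p(4)[rule_format, of "m - 1"] closest[of "1 + a"] that m_def by auto
  qed (simp_all add: p(2) add.commute)
  moreover have "ray_equiv \<gamma> \<rho>"
    unfolding ray_equiv_def \<rho>_def by (rule exI[of _ a], rule exI[of _ m]) (simp add: p(2))
  ultimately have "\<rho> \<in> \<omega>" using boundary_memI[OF assms \<open>\<gamma> \<in> \<omega>\<close>] by blast
  then show ?thesis using p(1) by (intro bexI[of _ \<rho>]) (simp_all add: \<rho>_def)
qed

lemma geo_ray_mem: "\<omega> \<in> boundary E \<Longrightarrow> geo_ray x \<omega> \<in> \<omega>"
  and geo_ray_0: "\<omega> \<in> boundary E \<Longrightarrow> geo_ray x \<omega> 0 = x"
proof -
  assume \<omega>: "\<omega> \<in> boundary E"
  have "\<exists>!\<gamma>. \<gamma> \<in> \<omega> \<and> \<gamma> 0 = x"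
  proof (rule ex_ex1I)
    show "\<exists>\<gamma>. \<gamma> \<in> \<omega> \<and> \<gamma> 0 = x" using boundary_ray_from[OF \<omega>] by blast
    show "\<gamma> = \<delta>" if "\<gamma> \<in> \<omega> \<and> \<gamma> 0 = x" "\<delta> \<in> \<omega> \<and> \<delta> 0 = x" for \<gamma> \<delta>
      using that ray_eqI boundary_ray[OF \<omega>] boundary_ray_equiv[OF \<omega>] by simp
  qed
  then have "geo_ray x \<omega> \<in> \<omega> \<and> geo_ray x \<omega> 0 = x"
    unfolding geo_ray_def by (rule theI')
  then show "geo_ray x \<omega> \<in> \<omega>" "geo_ray x \<omega> 0 = x" by auto
qed

lemma geo_ray_eqI:
  assumes "\<omega> \<in> boundary E" "\<delta> \<in> \<omega>" shows "geo_ray (\<delta> 0) \<omega> = \<delta>"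
proof -
  have "geo_ray (\<delta> 0) \<omega> \<in> \<omega>" "geo_ray (\<delta> 0) \<omega> 0 = \<delta> 0"
    using geo_ray_mem geo_ray_0 assms(1) by auto
  then show ?thesis
    using ray_eqI boundary_ray[OF assms(1)] boundary_ray_equiv[OF assms(1)] assms(2) by blast
qed

end

section \<open>The horocycle bracket\<close>

context tree
begin

lemma geo_ray_gdist: "\<omega> \<in> boundary E \<Longrightarrow> d x (geo_ray x \<omega> n) = n"
  using ray_gdist[OF boundary_ray[OF _ geo_ray_mem], of \<omega> x n] geo_ray_0[of \<omega> x] by simp

lemma geo_ray_shift:
  assumes "\<omega> \<in> boundary E" shows "geo_ray (geo_ray x \<omega> a) \<omega> = (\<lambda>n. geo_ray x \<omega> (n + a))"
  using geo_ray_eqI[OF assms boundary_shift[OF assms geo_ray_mem[OF assms]]] by simp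

lemma range_geo_ray_inj:
  assumes "\<omega> \<in> boundary E" "range (geo_ray y \<omega>) = range (geo_ray y' \<omega>)"
  shows "y' = y"
proof -
  have "y' \<in> range (geo_ray y \<omega>)" using assms(2) geo_ray_0[OF assms(1), of y'] by (metis rangeI)
  then obtain a where a: "y' = geo_ray y \<omega> a" by blast
  have "y \<in> range (geo_ray y' \<omega>)" using assms(2) geo_ray_0[OF assms(1), of y] by (metis rangeI)
  then obtain c where "y = geo_ray y \<omega> (c + a)" using a geo_ray_shift[OF assms(1)] by auto
  then have "c + a = 0" using geo_ray_gdist[OF assms(1), of y "c + a"] by simp
  then show ?thesis using a geo_ray_0[OF assms(1)] by simp
qed

text \<open>The vertex y in the definition of the horocycle bracket is where the rays from o and
  from x to \<omega> merge, i.e. \<open>geo_ray o \<omega> k\<close> for the least admissible shift k.\<close>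

lemma geo_ray_confluence:
  assumes \<omega>: "\<omega> \<in> boundary E" and km: "\<forall>n. geo_ray o' \<omega> (n + k) = geo_ray x \<omega> (n + m)"
    and least: "\<And>k' m'. \<forall>n. geo_ray o' \<omega> (n + k') = geo_ray x \<omega> (n + m') \<Longrightarrow> k \<le> k'"
  shows "range (geo_ray o' \<omega>) \<inter> range (geo_ray x \<omega>) = range (geo_ray (geo_ray o' \<omega> k) \<omega>)"
proof (intro equalityI subsetI)
  let ?\<rho> = "geo_ray o' \<omega>" and ?\<sigma> = "geo_ray x \<omega>"
  fix z assume "z \<in> range ?\<rho> \<inter> range ?\<sigma>"
  then obtain a c where ac: "z = ?\<rho> a" "z = ?\<sigma> c" by blast
  have "geo_ray z \<omega> = (\<lambda>n. ?\<rho> (n + a))" using geo_ray_shift[OF \<omega>, of o' a] ac(1) by simp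
  moreover have "geo_ray z \<omega> = (\<lambda>n. ?\<sigma> (n + c))" using geo_ray_shift[OF \<omega>, of x c] ac(2) by simp
  ultimately have "k \<le> a" using least[of a c] by (metis fun_eq_iff)
  then have "z = geo_ray (?\<rho> k) \<omega> (a - k)" using ac(1) geo_ray_shift[OF \<omega>] by simp
  then show "z \<in> range (geo_ray (?\<rho> k) \<omega>)" by simp
next
  let ?\<rho> = "geo_ray o' \<omega>" and ?\<sigma> = "geo_ray x \<omega>"
  fix z assume "z \<in> range (geo_ray (?\<rho> k) \<omega>)"
  then obtain n where "z = geo_ray (?\<rho> k) \<omega> n" by blast
  then have z: "z = ?\<rho> (n + k)" using geo_ray_shift[OF \<omega>] by simp
  have "z \<in> range ?\<rho>" using z by simp
  moreover have "z \<in> range ?\<sigma>" using z km by simp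
  ultimately show "z \<in> range ?\<rho> \<inter> range ?\<sigma>" by blast
qed

lemma horo_eq:
  assumes \<omega>: "\<omega> \<in> boundary E" and km: "\<forall>n. geo_ray o' \<omega> (n + k) = geo_ray x \<omega> (n + m)"
  shows "horo E o' x \<omega> = int k - int m"
proof -
  let ?\<rho> = "geo_ray o' \<omega>" and ?\<sigma> = "geo_ray x \<omega>"
  define k0 where "k0 = (LEAST k. \<exists>m. \<forall>n. ?\<rho> (n + k) = ?\<sigma> (n + m))"
  have "\<exists>m. \<forall>n. ?\<rho> (n + k0) = ?\<sigma> (n + m)"
    unfolding k0_def by (rule LeastI[of _ k]) (rule exI[of _ m], fact km)
  then obtain m0 where m0: "\<forall>n. ?\<rho> (n + k0) = ?\<sigma> (n + m0)" by blast
  have least: "k0 \<le> k'" if "\<forall>n. ?\<rho> (n + k') = ?\<sigma> (n + m')" for k' m'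
    unfolding k0_def using that by (rule Least_le[OF exI])
  have "range ?\<rho> \<inter> range ?\<sigma> = range (geo_ray (?\<rho> k0) \<omega>)"
    by (rule geo_ray_confluence[OF \<omega> m0]) (rule least)
  then have "(THE y. range ?\<rho> \<inter> range ?\<sigma> = range (geo_ray y \<omega>)) = ?\<rho> k0"
    using range_geo_ray_inj[OF \<omega>, of "?\<rho> k0"] by (intro the_equality) simp_all
  moreover have "d o' (?\<rho> k0) = k0" by (rule geo_ray_gdist[OF \<omega>])
  moreover have "d x (?\<rho> k0) = m0" using geo_ray_gdist[OF \<omega>, of x m0] m0[rule_format, of 0] by simp
  ultimately have horo: "horo E o' x \<omega> = int k0 - int m0" unfolding horo_def Let_def by simp
  have "?\<sigma> (k0 + m) = ?\<rho> (k + k0)" using km[rule_format, of k0] by (simp add: add.commute)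
  also have "\<dots> = ?\<sigma> (k + m0)" using m0 by simp
  finally have "d x (?\<sigma> (k0 + m)) = d x (?\<sigma> (k + m0))" by (rule arg_cong)
  then have "k0 + m = k + m0" by (simp only: geo_ray_gdist[OF \<omega>])
  then show ?thesis using horo by simp
qed

lemma horo_eventually:
  assumes \<omega>: "\<omega> \<in> boundary E" and "\<gamma> \<in> \<omega>"
  shows "\<exists>N. \<forall>n\<ge>N. horo E o' x \<omega> = int (d o' (\<gamma> n)) - int (d x (\<gamma> n))"
proof -
  let ?\<rho> = "geo_ray o' \<omega>" and ?\<sigma> = "geo_ray x \<omega>"
  obtain k m where km: "\<forall>n. ?\<rho> (n + k) = ?\<sigma> (n + m)"
    using boundary_ray_equiv[OF \<omega> geo_ray_mem[OF \<omega>] geo_ray_mem[OF \<omega>]] unfolding ray_equiv_def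
      by blast
  obtain k' m' where km': "\<forall>n. ?\<rho> (n + k') = \<gamma> (n + m')"
    using boundary_ray_equiv[OF \<omega> geo_ray_mem[OF \<omega>] \<open>\<gamma> \<in> \<omega>\<close>] unfolding ray_equiv_def by blast
  have "horo E o' x \<omega> = int (d o' (\<gamma> n)) - int (d x (\<gamma> n))" if "m' + k \<le> n" for n
  proof -
    define j where "j = n - m' + k'"
    have "\<gamma> n = ?\<rho> j" using km'[rule_format, of "n - m'"] that j_def by simp
    moreover have "?\<rho> j = ?\<sigma> (j - k + m)" using km[rule_format, of "j - k"] that j_def by simp
    ultimately have "d o' (\<gamma> n) = j" "d x (\<gamma> n) = j - k + m"
      using geo_ray_gdist[OF \<omega>, of o' j] geo_ray_gdist[OF \<omega>, of x "j - k + m"] by simp_all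
    then show ?thesis using horo_eq[OF \<omega> km] that j_def by simp
  qed
  then show ?thesis by blast
qed

lemma horo_self: "\<omega> \<in> boundary E \<Longrightarrow> horo E o' o' \<omega> = 0"
  using horo_eq[of \<omega> o' 0 o' 0] by simp

end

section \<open>Automorphisms\<close>

lemma aut_bij: "g \<in> aut E \<Longrightarrow> bij g"
  unfolding aut_def by blast

lemma aut_adj_iff: "g \<in> aut E \<Longrightarrow> E (g x) (g y) \<longleftrightarrow> E x y"
  unfolding aut_def by blast

lemma aut_inv_apply [simp]: "g \<in> aut E \<Longrightarrow> inv g (g x) = x"
  using aut_bij bij_is_inj inv_f_f by metis

lemma aut_apply_inv [simp]: "g \<in> aut E \<Longrightarrow> g (inv g x) = x"
  using aut_bij bij_inv_eq_iff by metis

lemma aut_inv: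
  assumes "g \<in> aut E" shows "inv g \<in> aut E"
proof -
  have "E (inv g x) (inv g y) \<longleftrightarrow> E x y" for x y
    using aut_adj_iff[OF assms, of "inv g x" "inv g y"] assms by simp
  then show ?thesis using bij_imp_bij_inv[OF aut_bij[OF assms]] unfolding aut_def by simp
qed

lemma aut_comp: "f \<in> aut E \<Longrightarrow> g \<in> aut E \<Longrightarrow> f \<circ> g \<in> aut E"
  unfolding aut_def using bij_comp by fastforce

lemma aut_id: "id \<in> aut E"
  unfolding aut_def by simp

lemma aut_funpow: "f \<in> aut E \<Longrightarrow> f ^^ n \<in> aut E"
  by (induction n) (auto simp: aut_id aut_comp)

lemma aut_zpow: "f \<in> aut E \<Longrightarrow> zpow f j \<in> aut E"
  unfolding zpow_def using aut_funpow[of f E] aut_funpow[OF aut_inv, of f E] by simp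

lemma zpow_neg_cancel:
  assumes "bij f" shows "zpow f (- j) (zpow f j x) = x"
proof (cases "0 \<le> j")
  case True
  then have "zpow f (- j) (zpow f j x) = (inv f ^^ nat j) ((f ^^ nat j) x)"
    by (cases "j = 0") (simp_all add: zpow_def)
  then show ?thesis using fun_cong[OF inv_fn_o_fn_is_id[OF assms, of "nat j"], of x] by simp
next
  case False
  then have "zpow f (- j) (zpow f j x) = (f ^^ nat (- j)) ((inv f ^^ nat (- j)) x)"
    by (simp add: zpow_def)
  then show ?thesis using fun_cong[OF fn_o_inv_fn_is_id[OF assms, of "nat (- j)"], of x] by simp
qed

lemma aut_ray: "g \<in> aut E \<Longrightarrow> ray E \<gamma> \<Longrightarrow> ray E (g \<circ> \<gamma>)"
  unfolding ray_def by (simp add: aut_adj_iff inj_eq[OF bij_is_inj[OF aut_bij]])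

lemma ray_equiv_comp: "ray_equiv \<gamma> \<delta> \<Longrightarrow> ray_equiv (g \<circ> \<gamma>) (g \<circ> \<delta>)"
  unfolding ray_equiv_def comp_def by metis

lemma bd_act_eq_class:
  assumes g: "g \<in> aut E" and \<omega>: "\<omega> \<in> boundary E" "\<gamma> \<in> \<omega>"
  shows "bd_act g \<omega> = {\<delta>. ray E \<delta> \<and> ray_equiv (g \<circ> \<gamma>) \<delta>}"
proof (intro equalityI subsetI)
  fix \<delta> assume "\<delta> \<in> bd_act g \<omega>"
  then obtain \<delta>0 where "\<delta> = g \<circ> \<delta>0" "\<delta>0 \<in> \<omega>" unfolding bd_act_def by blast
  then show "\<delta> \<in> {\<delta>. ray E \<delta> \<and> ray_equiv (g \<circ> \<gamma>) \<delta>}"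
    using aut_ray[OF g] boundary_ray[OF \<omega>(1)] ray_equiv_comp boundary_ray_equiv[OF \<omega>] by blast
next
  fix \<delta> assume "\<delta> \<in> {\<delta>. ray E \<delta> \<and> ray_equiv (g \<circ> \<gamma>) \<delta>}"
  then have "ray E (inv g \<circ> \<delta>)" "ray_equiv (inv g \<circ> (g \<circ> \<gamma>)) (inv g \<circ> \<delta>)"
    using aut_ray[OF aut_inv[OF g]] ray_equiv_comp by auto
  moreover have "inv g \<circ> (g \<circ> \<gamma>) = \<gamma>" using g by (simp add: fun_eq_iff)
  ultimately have "inv g \<circ> \<delta> \<in> \<omega>" using boundary_memI[OF \<omega>] by simp
  moreover have "\<delta> = g \<circ> (inv g \<circ> \<delta>)" using g by (simp add: fun_eq_iff)
  ultimately show "\<delta> \<in> bd_act g \<omega>" unfolding bd_act_def by blast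
qed

lemma comp_mem_bd_act: "\<gamma> \<in> \<omega> \<Longrightarrow> g \<circ> \<gamma> \<in> bd_act g \<omega>"
  unfolding bd_act_def by blast

lemma bd_act_boundary:
  assumes "g \<in> aut E" "\<omega> \<in> boundary E" shows "bd_act g \<omega> \<in> boundary E"
proof -
  obtain \<gamma> where "\<gamma> \<in> \<omega>" using boundary_nonempty[OF assms(2)] by blast
  then have "ray E (g \<circ> \<gamma>)" using aut_ray[OF assms(1) boundary_ray[OF assms(2)]] by blast
  then show ?thesis
    using bd_act_eq_class[OF assms \<open>\<gamma> \<in> \<omega>\<close>] unfolding boundary_def by blast
qed

lemma bd_act_eqI:
  assumes "g \<in> aut E" "\<omega> \<in> boundary E" "\<omega>' \<in> boundary E" "\<gamma> \<in> \<omega>" "g \<circ> \<gamma> \<in> \<omega>'"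
  shows "bd_act g \<omega> = \<omega>'"
  using boundary_eqI[OF bd_act_boundary[OF assms(1,2)] assms(3) comp_mem_bd_act[OF assms(4)]
      assms(5)] .

lemma bd_act_comp: "bd_act (f \<circ> g) \<omega> = bd_act f (bd_act g \<omega>)"
  unfolding bd_act_def by (auto simp: image_comp o_assoc)

lemma bd_act_inv:
  assumes "g \<in> aut E" shows "bd_act (inv g) (bd_act g \<omega>) = \<omega>"
proof -
  have "inv g \<circ> g = id" using assms by (simp add: fun_eq_iff)
  then show ?thesis unfolding bd_act_comp[symmetric] by (simp add: bd_act_def)
qed

context connected_graph
begin

lemma gdist_aut_le: "g \<in> aut E \<Longrightarrow> d (g x) (g y) \<le> d x y"
proof -
  assume g: "g \<in> aut E"
  obtain p where "p 0 = x" "p (d x y) = y" "walk E p (d x y)" using gdist_walk by blast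
  then show ?thesis
    using gdist_le_walk[of "g \<circ> p" "g x" "d x y" "g y"] by (simp add: walk_def aut_adj_iff[OF g])
qed

lemma gdist_aut: "g \<in> aut E \<Longrightarrow> d (g x) (g y) = d x y"
  using gdist_aut_le[of g x y] gdist_aut_le[OF aut_inv, of g "g x" "g y"] by simp

end

context tree
begin

lemma horo_cocycle:
  assumes g: "g \<in> aut E" and \<omega>: "\<omega> \<in> boundary E"
  shows "horo E o' (g x) (bd_act g \<omega>) = horo E o' x \<omega> + horo E o' (g o') (bd_act g \<omega>)"
proof -
  obtain \<gamma> where "\<gamma> \<in> \<omega>" using boundary_nonempty[OF \<omega>] by blast
  have g\<omega>: "bd_act g \<omega> \<in> boundary E" "g \<circ> \<gamma> \<in> bd_act g \<omega>"
    using bd_act_boundary[OF g \<omega>] comp_mem_bd_act[OF \<open>\<gamma> \<in> \<omega>\<close>] by auto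
  obtain N1 where N1: "\<forall>n\<ge>N1.
      horo E o' (g x) (bd_act g \<omega>) = int (d o' (g (\<gamma> n))) - int (d (g x) (g (\<gamma> n)))"
    using horo_eventually[OF g\<omega>, of o' "g x"] by auto
  obtain N2 where N2: "\<forall>n\<ge>N2.
      horo E o' (g o') (bd_act g \<omega>) = int (d o' (g (\<gamma> n))) - int (d (g o') (g (\<gamma> n)))"
    using horo_eventually[OF g\<omega>, of o' "g o'"] by auto
  obtain N3 where N3: "\<forall>n\<ge>N3. horo E o' x \<omega> = int (d o' (\<gamma> n)) - int (d x (\<gamma> n))"
    using horo_eventually[OF \<omega> \<open>\<gamma> \<in> \<omega>\<close>] by blast
  show ?thesis
    using N1[rule_format, of "N1 + N2 + N3"] N2[rule_format, of "N1 + N2 + N3"]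
      N3[rule_format, of "N1 + N2 + N3"] gdist_aut[OF g] by simp
qed

lemma horo_invariant_stab:
  assumes "k \<in> aut E" "k o' = o'" "\<omega> \<in> boundary E"
  shows "horo E o' (k x) (bd_act k \<omega>) = horo E o' x \<omega>"
  using horo_cocycle[OF assms(1,3), of o' x] horo_self[OF bd_act_boundary[OF assms(1,3)]] assms(2)
    by simp

lemma horo_inverse:
  assumes "g \<in> aut E" "\<omega> \<in> boundary E"
  shows "horo E o' (g o') (bd_act g \<omega>) = - horo E o' (inv g o') \<omega>"
  using horo_cocycle[OF aut_inv[OF assms(1)] bd_act_boundary[OF assms], of o' "g o'"]
    horo_self[OF assms(2)] bd_act_inv[OF assms(1)] assms(1) by simp

lemma horo_invariant_horo_stab:
  assumes "n \<in> horo_stab E \<omega>" "\<omega> \<in> boundary E"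
  shows "horo E o' (n x) \<omega> = horo E o' x \<omega>"
proof -
  obtain z where "n \<in> aut E" "bd_act n \<omega> = \<omega>" "n z = z" using assms(1) unfolding horo_stab_def
    by blast
  then show ?thesis
    using horo_cocycle[OF _ assms(2), of n o' x] horo_cocycle[OF _ assms(2), of n o' z] by simp
qed

end

section \<open>Homogeneous trees\<close>

lemma bij_betw_map_point:
  assumes "finite A" "card A = card B" "a \<in> A" "b \<in> B"
  obtains s where "bij_betw s A B" "s a = b"
proof -
  have "finite B" using assms(1-3) card_gt_0_iff by fastforce
  then obtain h where h: "bij_betw h (A - {a}) (B - {b})"
    using finite_same_card_bij[of "A - {a}" "B - {b}"] assms by auto
  have "bij_betw (\<lambda>x. if x \<in> {a} then b else h x) ({a} \<union> (A - {a})) ({b} \<union> (B - {b}))"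
    by (rule bij_betw_disjoint_Un) (use h in auto)
  moreover have "{a} \<union> (A - {a}) = A" "{b} \<union> (B - {b}) = B" using assms by auto
  ultimately show ?thesis using that[of "\<lambda>x. if x \<in> {a} then b else h x"] by simp
qed

context tree
begin

definition children :: "'v \<Rightarrow> 'v \<Rightarrow> 'v set" where
  "children b x = {y. E x y \<and> d b y = Suc (d b x)}"

lemma children_parent: "y \<in> children b x \<Longrightarrow> y \<noteq> b \<and> parent b y = x"
  unfolding children_def using parent_eqI[OF adj_sym] by fastforce

lemma mem_children_parent: "x \<noteq> b \<Longrightarrow> x \<in> children b (parent b x)"
  unfolding children_def using parent_closer gdist_parent adj_sym by blast

lemma neighbours_eq: "x \<noteq> b \<Longrightarrow> {y. E x y} = insert (parent b x) (children b x)"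
  unfolding children_def using parent_closer parent_eqI gdist_adjacent by fastforce

end

locale homogeneous_tree = tree E for E :: "'v \<Rightarrow> 'v \<Rightarrow> bool" +
  fixes q :: nat
  assumes degree_finite: "finite {y. E x y}" and degree: "card {y. E x y} = q + 1"
begin

lemma children_finite: "finite (children b x)"
  unfolding children_def by (rule finite_subset[OF _ degree_finite]) blast

lemma card_children: "card (children b x) = (if x = b then q + 1 else q)"
proof (cases "x = b")
  case True
  then have "children b x = {y. E x y}" unfolding children_def using gdist_edge by auto
  then show ?thesis using True degree by simp
next
  case False
  have "parent b x \<notin> children b x" unfolding children_def using parent_closer[OF False] by auto
  then show ?thesis using neighbours_eq[OF False] degree[of x] children_finite False by simp
qed

lemma card_children_eq: "d b x = d b x' \<Longrightarrow> card (children b x) = card (children b x')"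
  using card_children by (metis gdist_eq_0_iff)

end

text \<open>Rays from b can be matched by a stabiliser of b: extend the matching level by level,
  using that all vertices of the same level have equally many children.\<close>

locale two_rays = homogeneous_tree E q for E :: "'v \<Rightarrow> 'v \<Rightarrow> bool" and q +
  fixes b :: 'v and \<alpha> \<beta> :: "nat \<Rightarrow> 'v"
  assumes ray_\<alpha>: "ray E \<alpha>" and \<alpha>_0: "\<alpha> 0 = b" and ray_\<beta>: "ray E \<beta>" and \<beta>_0: "\<beta> 0 = b"
begin

lemma gdist_\<alpha>: "d b (\<alpha> t) = t" and gdist_\<beta>: "d b (\<beta> t) = t"
  using ray_gdist[OF ray_\<alpha>] ray_gdist[OF ray_\<beta>] \<alpha>_0 \<beta>_0 by auto

lemma \<alpha>_children: "\<alpha> (Suc t) \<in> children b (\<alpha> t)" and \<beta>_children: "\<beta> (Suc t) \<in> children b (\<beta> t)"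
  using ray_\<alpha> ray_\<beta> gdist_\<alpha> gdist_\<beta> unfolding children_def ray_def by auto

definition child_bij :: "'v \<Rightarrow> 'v \<Rightarrow> 'v \<Rightarrow> 'v" where
  "child_bij p p' = (SOME s. bij_betw s (children b p) (children b p') \<and>
     (\<forall>t. p = \<alpha> t \<and> p' = \<beta> t \<longrightarrow> s (\<alpha> (Suc t)) = \<beta> (Suc t)))"

lemma child_bij:
  assumes "d b p = d b p'"
  shows "bij_betw (child_bij p p') (children b p) (children b p') \<and>
     (\<forall>t. p = \<alpha> t \<and> p' = \<beta> t \<longrightarrow> child_bij p p' (\<alpha> (Suc t)) = \<beta> (Suc t))"
proof -
  have card: "card (children b p) = card (children b p')" using card_children_eq[OF assms] .
  have "\<exists>s. bij_betw s (children b p) (children b p') \<and>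
     (\<forall>t. p = \<alpha> t \<and> p' = \<beta> t \<longrightarrow> s (\<alpha> (Suc t)) = \<beta> (Suc t))"
  proof (cases "\<exists>t. p = \<alpha> t \<and> p' = \<beta> t")
    case True
    then obtain t where t: "p = \<alpha> t" "p' = \<beta> t" by blast
    obtain s where "bij_betw s (children b p) (children b p')" "s (\<alpha> (Suc t)) = \<beta> (Suc t)"
      using bij_betw_map_point[OF children_finite card] \<alpha>_children \<beta>_children t by metis
    moreover have "t' = t" if "p = \<alpha> t'" for t' using that t gdist_\<alpha> by metis
    ultimately show ?thesis using t by blast
  next
    case False
    then show ?thesis using finite_same_card_bij[OF children_finite children_finite card] by blast
  qed
  then show ?thesis unfolding child_bij_def by (rule someI_ex)
qed

primrec lift :: "nat \<Rightarrow> 'v \<Rightarrow> 'v" where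
  "lift 0 x = x"
| "lift (Suc n) x = child_bij (parent b x) (lift n (parent b x)) x"

definition transfer :: "'v \<Rightarrow> 'v" where
  "transfer x = lift (d b x) x"

lemma transfer_base [simp]: "transfer b = b"
  unfolding transfer_def by simp

lemma transfer_step: "x \<noteq> b \<Longrightarrow> transfer x = child_bij (parent b x) (transfer (parent b x)) x"
  unfolding transfer_def using gdist_parent by simp

lemma gdist_transfer: "d b (transfer x) = d b x"
proof (induction "d b x" arbitrary: x)
  case 0
  then have "x = b" by simp
  then show ?case by simp
next
  case (Suc n)
  have "x \<noteq> b" using Suc.hyps(2) by auto
  then have "d b (transfer (parent b x)) = d b (parent b x)" using Suc gdist_parent by simp
  then have "transfer x \<in> children b (transfer (parent b x))"
    using child_bij mem_children_parent[OF \<open>x \<noteq> b\<close>] transfer_step[OF \<open>x \<noteq> b\<close>]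
    by (metis bij_betw_apply)
  then show ?case using gdist_parent[OF \<open>x \<noteq> b\<close>] \<open>d b (transfer (parent b x)) = d b (parent b x)\<close>
    by (simp add: children_def)
qed

lemma transfer_bij_children:
  "bij_betw (child_bij p (transfer p)) (children b p) (children b (transfer p))"
  using child_bij[of p "transfer p"] gdist_transfer by simp

lemma transfer_children: "x \<noteq> b \<Longrightarrow> transfer x \<in> children b (transfer (parent b x))"
  using bij_betw_apply[OF transfer_bij_children mem_children_parent] transfer_step by metis

lemma transfer_neq_b: "x \<noteq> b \<Longrightarrow> transfer x \<noteq> b"
  using children_parent[OF transfer_children] by blast

lemma parent_transfer: "x \<noteq> b \<Longrightarrow> parent b (transfer x) = transfer (parent b x)"
  using children_parent[OF transfer_children] by blast

lemma transfer_ray: "transfer (\<alpha> t) = \<beta> t"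
proof (induction t)
  case 0 then show ?case using \<alpha>_0 \<beta>_0 by simp
next
  case (Suc t)
  have "\<alpha> (Suc t) \<noteq> b" "parent b (\<alpha> (Suc t)) = \<alpha> t" using children_parent[OF \<alpha>_children] by auto
  then show ?case
    using transfer_step Suc child_bij[of "\<alpha> t" "\<beta> t"] gdist_\<alpha> gdist_\<beta> by simp
qed

lemma transfer_eq_b_iff: "transfer x = b \<longleftrightarrow> x = b"
  using transfer_neq_b[of x] transfer_base by blast

lemma inj_transfer: "inj transfer"
proof -
  have "x = y" if "transfer x = transfer y" for x y
    using that
  proof (induction "d b x" arbitrary: x y)
    case 0
    then have "x = b" by (metis gdist_eq_0_iff)
    then have "transfer y = b" using "0.prems" by simp
    then show ?case using \<open>x = b\<close> transfer_eq_b_iff[of y] by simp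
  next
    case (Suc n)
    have "x \<noteq> b" using Suc.hyps(2) by auto
    then have "transfer y \<noteq> b" using Suc.prems transfer_neq_b[OF \<open>x \<noteq> b\<close>] by simp
    then have "y \<noteq> b" by auto
    let ?p = "parent b x"
    have "transfer ?p = parent b (transfer x)" using parent_transfer[OF \<open>x \<noteq> b\<close>] by simp
    also have "\<dots> = transfer (parent b y)" using parent_transfer[OF \<open>y \<noteq> b\<close>] Suc.prems by simp
    finally have p: "?p = parent b y"
      using Suc.hyps(1)[of ?p "parent b y"] gdist_parent[OF \<open>x \<noteq> b\<close>] Suc.hyps(2) by simp
    have "child_bij ?p (transfer ?p) x = transfer x" by (fact transfer_step[OF \<open>x \<noteq> b\<close>, symmetric])
    also have "\<dots> = transfer y" by (rule Suc.prems)
    also have "\<dots> = child_bij ?p (transfer ?p) y" using transfer_step[OF \<open>y \<noteq> b\<close>] p by simp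
    finally show ?case
      using inj_onD[OF bij_betw_imp_inj_on[OF transfer_bij_children]]
        mem_children_parent[OF \<open>x \<noteq> b\<close>] mem_children_parent[OF \<open>y \<noteq> b\<close>] p by auto
  qed
  then show ?thesis by (rule injI)
qed

lemma surj_transfer: "surj transfer"
proof -
  have "y \<in> range transfer" for y
  proof (induction "d b y" arbitrary: y)
    case 0
    then have "y = b" by (metis gdist_eq_0_iff)
    then show ?case using rangeI[of transfer b] by simp
  next
    case (Suc n)
    have "y \<noteq> b" using Suc.hyps(2) by auto
    moreover have "n = d b (parent b y)" using gdist_parent[OF \<open>y \<noteq> b\<close>] Suc.hyps by simp
    then have "parent b y \<in> range transfer" by (rule Suc.hyps(1))
    then obtain p where p: "transfer p = parent b y" by (metis rangeE)
    then have "y \<in> children b (transfer p)" using mem_children_parent[OF \<open>y \<noteq> b\<close>] by simp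
    then obtain x where x: "x \<in> children b p" "child_bij p (transfer p) x = y"
      using bij_betw_imp_surj_on[OF transfer_bij_children, of p] by (metis imageE)
    then have "transfer x = y" using children_parent[OF x(1)] transfer_step by metis
    then show ?case by blast
  qed
  then show ?thesis by blast
qed

lemma transfer_adj_iff: "E (transfer x) (transfer y) \<longleftrightarrow> E x y"
proof -
  have "E (transfer x) (transfer y) \<longleftrightarrow>
      (transfer x \<noteq> b \<and> transfer y = parent b (transfer x)) \<or>
      (transfer y \<noteq> b \<and> transfer x = parent b (transfer y))"
    by (rule edge_iff_parent)
  also have "\<dots> \<longleftrightarrow>
      (x \<noteq> b \<and> transfer y = transfer (parent b x)) \<or> (y \<noteq> b \<and> transfer x = transfer (parent b y))"
    by (auto simp: transfer_eq_b_iff parent_transfer)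
  also have "\<dots> \<longleftrightarrow> (x \<noteq> b \<and> y = parent b x) \<or> (y \<noteq> b \<and> x = parent b y)"
    using inj_transfer by (simp add: inj_eq)
  also have "\<dots> \<longleftrightarrow> E x y" by (rule edge_iff_parent[symmetric])
  finally show ?thesis .
qed

lemma transfer_stab: "transfer \<in> stab E b"
  unfolding stab_def aut_def using inj_transfer surj_transfer transfer_adj_iff bij_def by auto

end

lemma (in homogeneous_tree) stab_transitive_on_rays:
  assumes "ray E \<alpha>" "ray E \<beta>" "\<alpha> 0 = b" "\<beta> 0 = b"
  obtains k where "k \<in> stab E b" "k \<circ> \<alpha> = \<beta>"
proof -
  interpret two_rays E q b \<alpha> \<beta> by unfold_locales (use assms in auto)
  show ?thesis using that[OF transfer_stab] transfer_ray by (simp add: fun_eq_iff)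
qed

section \<open>The Iwasawa decomposition\<close>

locale translation_axis = homogeneous_tree E q for E :: "'v \<Rightarrow> 'v \<Rightarrow> bool" and q +
  fixes L :: "int \<Rightarrow> 'v" and \<tau> :: "'v \<Rightarrow> 'v" and \<omega>p :: "(nat \<Rightarrow> 'v) set"
  assumes line: "line E L"
    and \<tau>_aut: "\<tau> \<in> aut E" and \<tau>_shift: "\<tau> (L i) = L (i + 1)"
    and \<omega>p: "\<omega>p \<in> boundary E" and forward_ray: "(\<lambda>n. L (int n)) \<in> \<omega>p"
begin

lemma ray_line: "ray E (\<lambda>n. L (a + int n))"
  unfolding ray_def
proof
  fix n
  have "a + int (Suc n) = (a + int n) + 1" "a + int (Suc (Suc n)) = (a + int n) + 2" by simp_all
  then show "E (L (a + int n)) (L (a + int (Suc n))) \<and> L (a + int n) \<noteq> L (a + int (Suc (Suc n)))"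
    using line unfolding line_def by presburger
qed

lemma gdist_line: "d (L a) (L c) = nat \<bar>c - a\<bar>"
proof (cases "a \<le> c")
  case True
  then show ?thesis using ray_gdist[OF ray_line, of a "nat (c - a)"] by simp
next
  case False
  then show ?thesis using ray_gdist[OF ray_line, of c "nat (a - c)"] gdist_sym by simp
qed

lemma zpow_line: "zpow \<tau> j (L i) = L (i + j)"
proof -
  have "inv \<tau> (L i) = L (i - 1)" for i
    using \<tau>_shift[of "i - 1"] aut_inv_apply[OF \<tau>_aut] by (metis diff_add_cancel)
  then have "(inv \<tau> ^^ n) (L i) = L (i - int n)" for n by (induction n) (auto simp: algebra_simps)
  moreover have "(\<tau> ^^ n) (L i) = L (i + int n)" for n
    by (induction n) (auto simp: \<tau>_shift algebra_simps)
  ultimately show ?thesis unfolding zpow_def by auto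
qed

lemma bd_act_zpow: "bd_act (zpow \<tau> j) \<omega>p = \<omega>p"
proof (rule bd_act_eqI[OF aut_zpow[OF \<tau>_aut] \<omega>p \<omega>p forward_ray])
  have "ray_equiv (\<lambda>n. L (int n)) (\<lambda>n. L (j + int n))"
    unfolding ray_equiv_def
    by (rule exI[of _ "nat (max j 0)"], rule exI[of _ "nat (max (- j) 0)"])
      (auto simp: max_def algebra_simps)
  moreover have "zpow \<tau> j \<circ> (\<lambda>n. L (int n)) = (\<lambda>n. L (j + int n))"
    by (simp add: zpow_line fun_eq_iff add.commute)
  ultimately show "zpow \<tau> j \<circ> (\<lambda>n. L (int n)) \<in> \<omega>p"
    using boundary_memI[OF \<omega>p forward_ray] ray_line by simp
qed

lemma horo_line: "horo E (L 0) (L j) \<omega>p = j"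
proof -
  obtain N where N:
      "\<forall>n\<ge>N. horo E (L 0) (L j) \<omega>p = int (d (L 0) (L (int n))) - int (d (L j) (L (int n)))"
    using horo_eventually[OF \<omega>p forward_ray] by blast
  define n where "n = N + nat \<bar>j\<bar>"
  then have "horo E (L 0) (L j) \<omega>p = int (d (L 0) (L (int n))) - int (d (L j) (L (int n)))"
    using N by (simp del: of_nat_add)
  also have "\<dots> = j" using gdist_line[of 0 "int n"] gdist_line[of j "int n"] n_def abs_ge_self[of j]
    by simp
  finally show ?thesis .
qed

lemma horo_decomposition:
  assumes "k \<in> stab E (L 0)" "n \<in> horo_stab E \<omega>p"
  shows "horo E (L 0) ((k \<circ> n \<circ> zpow \<tau> j) (L 0)) (bd_act (k \<circ> n \<circ> zpow \<tau> j) \<omega>p) = j"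
proof -
  have k: "k \<in> aut E" "k (L 0) = L 0" and n: "n \<in> aut E" "bd_act n \<omega>p = \<omega>p"
    using assms unfolding stab_def horo_stab_def by auto
  have "horo E (L 0) ((k \<circ> n \<circ> zpow \<tau> j) (L 0)) (bd_act (k \<circ> n \<circ> zpow \<tau> j) \<omega>p)
      = horo E (L 0) (k (n (L j))) (bd_act k \<omega>p)"
    by (simp add: bd_act_comp bd_act_zpow n(2) zpow_line)
  also have "\<dots> = horo E (L 0) (n (L j)) \<omega>p" by (rule horo_invariant_stab[OF k \<omega>p])
  also have "\<dots> = j" using horo_invariant_horo_stab[OF assms(2) \<omega>p] horo_line by simp
  finally show ?thesis .
qed

text \<open>h maps the forward half of the axis to a ray that eventually agrees with the axis shifted
  by the horocycle index of h(L 0); undoing this shift yields an automorphism fixing a vertex.\<close>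

lemma horocyclic_part:
  assumes h: "h \<in> aut E" "bd_act h \<omega>p = \<omega>p"
  shows "h \<circ> zpow \<tau> (- horo E (L 0) (h (L 0)) \<omega>p) \<in> horo_stab E \<omega>p"
proof -
  let ?j = "horo E (L 0) (h (L 0)) \<omega>p"
  have "h \<circ> (\<lambda>n. L (int n)) \<in> \<omega>p" using comp_mem_bd_act[OF forward_ray, of h] h(2) by simp
  then have "ray_equiv (\<lambda>n. L (int n)) (h \<circ> (\<lambda>n. L (int n)))"
    by (rule boundary_ray_equiv[OF \<omega>p forward_ray])
  then obtain a c where ac: "\<forall>n. L (int (n + a)) = h (L (int (n + c)))"
    unfolding ray_equiv_def comp_def by blast
  obtain N where N: "\<forall>n\<ge>N. ?j = int (d (L 0) (L (int n))) - int (d (h (L 0)) (L (int n)))"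
    using horo_eventually[OF \<omega>p forward_ray] by blast
  have "d (L 0) (L (int (N + a))) = N + a" using gdist_line[of 0 "int (N + a)"] by simp
  moreover have "d (h (L 0)) (L (int (N + a))) = N + c"
    using ac[rule_format, of N] gdist_aut[OF h(1)] gdist_line[of 0 "int (N + c)"] by simp
  ultimately have j: "?j = int a - int c" using N[rule_format, of "N + a"] by simp
  have "(h \<circ> zpow \<tau> (- ?j)) (L (int a)) = h (L (int c))" by (simp add: zpow_line j)
  also have "\<dots> = L (int a)" using ac[rule_format, of 0] by simp
  finally have "(h \<circ> zpow \<tau> (- ?j)) (L (int a)) = L (int a)" .
  moreover have "bd_act (h \<circ> zpow \<tau> (- ?j)) \<omega>p = \<omega>p" by (simp add: bd_act_comp bd_act_zpow h(2))
  moreover have "h \<circ> zpow \<tau> (- ?j) \<in> aut E" using aut_comp[OF h(1) aut_zpow[OF \<tau>_aut]] .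
  ultimately show ?thesis unfolding horo_stab_def by blast
qed

lemma iwasawa_decomposition:
  assumes g: "g \<in> aut E"
  obtains k n where "k \<in> stab E (L 0)" "n \<in> horo_stab E \<omega>p"
    "g = k \<circ> n \<circ> zpow \<tau> (horo E (L 0) (g (L 0)) (bd_act g \<omega>p))"
proof -
  have g\<omega>p: "bd_act g \<omega>p \<in> boundary E" using bd_act_boundary[OF g \<omega>p] .
  have "ray E (\<lambda>n. L (int n))" using ray_line[of 0] by simp
  then obtain k where k: "k \<in> stab E (L 0)" "k \<circ> (\<lambda>n. L (int n)) = geo_ray (L 0) (bd_act g \<omega>p)"
    by (rule stab_transitive_on_rays[OF _ boundary_ray[OF g\<omega>p geo_ray_mem[OF g\<omega>p]] _
          geo_ray_0[OF g\<omega>p]]) simp_all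
  then have k_aut: "k \<in> aut E" "k (L 0) = L 0" unfolding stab_def by auto
  have "bd_act k \<omega>p = bd_act g \<omega>p"
    using bd_act_eqI[OF k_aut(1) \<omega>p g\<omega>p forward_ray] k(2) geo_ray_mem[OF g\<omega>p] by simp
  then have h: "inv k \<circ> g \<in> aut E" "bd_act (inv k \<circ> g) \<omega>p = \<omega>p"
    using aut_comp[OF aut_inv[OF k_aut(1)] g] bd_act_inv[OF k_aut(1), of \<omega>p]
      by (simp_all add: bd_act_comp)
  define j where "j = horo E (L 0) ((inv k \<circ> g) (L 0)) \<omega>p"
  have j: "horo E (L 0) (g (L 0)) (bd_act g \<omega>p) = j"
    using horo_invariant_stab[OF k_aut \<omega>p, of "inv k (g (L 0))"] k_aut(1)
      \<open>bd_act k \<omega>p = bd_act g \<omega>p\<close>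
    by (simp add: j_def)
  have "k \<circ> (inv k \<circ> g \<circ> zpow \<tau> (- j)) \<circ> zpow \<tau> j = g"
    using k_aut(1) zpow_neg_cancel[OF aut_bij[OF \<tau>_aut]] by (simp add: fun_eq_iff)
  then have "g = k \<circ> (inv k \<circ> g \<circ> zpow \<tau> (- j)) \<circ> zpow \<tau> (horo E (L 0) (g (L 0)) (bd_act g \<omega>p))"
    by (simp only: j)
  then show ?thesis by (rule that[OF k(1) horocyclic_part[OF h, folded j_def]])
qed

lemma Hfun_eq_horo:
  assumes "g \<in> aut E" shows "Hfun E (L 0) \<omega>p \<tau> g = horo E (L 0) (g (L 0)) (bd_act g \<omega>p)"
  unfolding Hfun_def
proof (rule the_equality)
  show "\<exists>k n. k \<in> stab E (L 0) \<and> n \<in> horo_stab E \<omega>p \<and>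
      g = k \<circ> n \<circ> zpow \<tau> (horo E (L 0) (g (L 0)) (bd_act g \<omega>p))"
    using iwasawa_decomposition[OF assms] by blast
next
  fix j assume "\<exists>k n. k \<in> stab E (L 0) \<and> n \<in> horo_stab E \<omega>p \<and> g = k \<circ> n \<circ> zpow \<tau> j"
  then obtain k n where "k \<in> stab E (L 0)" "n \<in> horo_stab E \<omega>p" "g = k \<circ> n \<circ> zpow \<tau> j" by blast
  then show "j = horo E (L 0) (g (L 0)) (bd_act g \<omega>p)" using horo_decomposition[of k n j] by simp
qed

lemma bd_act_reflection:
  assumes r: "r \<in> stab E (L 0)" "r \<circ> r = id" "\<forall>j. r \<circ> zpow \<tau> j \<circ> inv r = zpow \<tau> (- j)"
    and \<omega>m: "\<omega>m \<in> boundary E" "(\<lambda>n. L (- int n)) \<in> \<omega>m"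
  shows "bd_act r \<omega>p = \<omega>m"
proof -
  have r_aut: "r \<in> aut E" "r (L 0) = L 0" using r(1) unfolding stab_def by auto
  have "inv r = r" using inv_unique_comp[OF r(2) r(2)] .
  then have "r (L j) = L (- j)" for j
    using fun_cong[OF r(3)[rule_format, of j], of "L 0"] r_aut(2) by (simp add: zpow_line)
  then have "r \<circ> (\<lambda>n. L (int n)) = (\<lambda>n. L (- int n))" by (simp add: fun_eq_iff)
  then show ?thesis using bd_act_eqI[OF r_aut(1) \<omega>p \<omega>m(1) forward_ray] \<omega>m(2) by simp
qed

end

lemma regular_tree_homogeneous: "regular_tree E q \<Longrightarrow> homogeneous_tree E q"
  unfolding regular_tree_def by unfold_locales blast+

theorem lemma2p3:
  fixes E :: "'v \<Rightarrow> 'v \<Rightarrow> bool" and q :: nat and v0 :: 'v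
    and \<omega>m \<omega>p :: "(nat \<Rightarrow> 'v) set" and L :: "int \<Rightarrow> 'v"
    and \<tau> r :: "'v \<Rightarrow> 'v"
  assumes tree: "regular_tree E q" and q2: "q \<ge> 2"
    and bm: "\<omega>m \<in> boundary E" and bp: "\<omega>p \<in> boundary E" and ne: "\<omega>m \<noteq> \<omega>p"
    and L: "line E L" "L 0 = v0" "(\<lambda>n. L (int n)) \<in> \<omega>p" "(\<lambda>n. L (- int n)) \<in> \<omega>m"
    and tau: "\<tau> \<in> aut E" "bd_act \<tau> \<omega>p = \<omega>p" "bd_act \<tau> \<omega>m = \<omega>m"
      "\<forall>i. \<tau> (L i) = L (i + 1)"
    and r: "r \<in> stab E v0" "r \<circ> r = id" "\<forall>j. r \<circ> zpow \<tau> j \<circ> inv r = zpow \<tau> (- j)"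
  shows "\<forall>g \<in> aut E. \<forall>g' \<in> aut E.
     (horo E v0 (g v0) (bd_act g \<omega>m) = Hfun E v0 \<omega>p \<tau> (g \<circ> r) \<and>
      Hfun E v0 \<omega>p \<tau> (g \<circ> r) = - horo E v0 (inv g v0) \<omega>m) \<and>
     Hfun E v0 \<omega>p \<tau> (g' \<circ> g) = Hfun E v0 \<omega>p \<tau> g + horo E v0 (g' v0) (bd_act (g' \<circ> g) \<omega>p) \<and>
     Hfun E v0 \<omega>p \<tau> (g' \<circ> g \<circ> r) = Hfun E v0 \<omega>p \<tau> (g \<circ> r) + horo E v0 (g' v0) (bd_act (g' \<circ> g) \<omega>m)"
proof (intro ballI)
  fix g g' assume g: "g \<in> aut E" and g': "g' \<in> aut E"
  interpret translation_axis E q L \<tau> \<omega>p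
    using regular_tree_homogeneous[OF tree] L(1,3) tau(1,4) bp
    by (simp add: translation_axis_def translation_axis_axioms_def)
  have r_aut: "r \<in> aut E" "r v0 = v0" using r(1) unfolding stab_def by auto
  have "bd_act r \<omega>p = \<omega>m" using bd_act_reflection[of r] r bm L by simp
  then have H: "Hfun E v0 \<omega>p \<tau> f = horo E v0 (f v0) (bd_act f \<omega>p)"
    and Hr: "Hfun E v0 \<omega>p \<tau> (f \<circ> r) = horo E v0 (f v0) (bd_act f \<omega>m)" if "f \<in> aut E" for f
    using Hfun_eq_horo[OF that] Hfun_eq_horo[OF aut_comp[OF that r_aut(1)]] r_aut(2) L(2)
    by (simp_all add: bd_act_comp)
  show "(horo E v0 (g v0) (bd_act g \<omega>m) = Hfun E v0 \<omega>p \<tau> (g \<circ> r) \<and>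
      Hfun E v0 \<omega>p \<tau> (g \<circ> r) = - horo E v0 (inv g v0) \<omega>m) \<and>
     Hfun E v0 \<omega>p \<tau> (g' \<circ> g) = Hfun E v0 \<omega>p \<tau> g + horo E v0 (g' v0) (bd_act (g' \<circ> g) \<omega>p) \<and>
     Hfun E v0 \<omega>p \<tau> (g' \<circ> g \<circ> r) = Hfun E v0 \<omega>p \<tau> (g \<circ> r) + horo E v0 (g' v0) (bd_act (g' \<circ> g) \<omega>m)"
    using Hr[OF g] H[OF g] H[OF aut_comp[OF g' g]] Hr[OF aut_comp[OF g' g]]
      horo_inverse[OF g bm, of v0] horo_cocycle[OF g' bd_act_boundary[OF g bp], of v0 "g v0"]
      horo_cocycle[OF g' bd_act_boundary[OF g bm], of v0 "g v0"]
    by (simp add: bd_act_comp)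
qed

end
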